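(* Under the standing assumptions, for $\theta\in(\pi/2,\pi)$ one has $w(\theta)=0$ if and only if $a>1/4$ and $\theta=\cos^{-1}\!\left(-\frac{1}{2\sqrt a}\right)$.
   Context: Standing assumptions: $a,b\in\mathbb{R}$ with $b>0$, $1+a+b>0$, $9-27a+b>0$, $2-8a+8a^2+ab\ne0$, $b+1-a\ne0$. Let $f^*(\zeta,\theta)=(\zeta+2\cos\theta)(2\zeta\cos\theta+1)+b\zeta-a(\zeta+2\cos\theta)^3$. Under these assumptions, for each $\theta\in(\pi/2,\pi)$ the polynomial $f^*(\cdot,\theta)$ has exactly one real zero in $(-1,1)$; denote it $w(\theta)$ (so $w(\theta)=1/\zeta(\theta)$). *)

theory Defs
  imports Complex_Main
begin

definition f_star :: "real \<Rightarrow> real \<Rightarrow> real \<Rightarrow> real \<Rightarrow> real" where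
  "f_star a b \<zeta> \<theta> =
     (\<zeta> + 2 * cos \<theta>) * (2 * \<zeta> * cos \<theta> + 1) + b * \<zeta> - a * (\<zeta> + 2 * cos \<theta>) ^ 3"

text \<open>w(theta): the (unique, under the standing assumptions) real zero of f_star in (-1,1).\<close>
definition w :: "real \<Rightarrow> real \<Rightarrow> real \<Rightarrow> real" where
  "w a b \<theta> = (THE \<zeta>. \<zeta> \<in> {-1<..<1} \<and> f_star a b \<zeta> \<theta> = 0)"

end

theory Submission
  imports Defs
begin

text \<open>
  Write \<open>c = cos \<theta> \<in> (-1, 0)\<close>. The divided difference of the cubic \<open>f_star a b \<cdot> \<theta>\<close> is positive
  on \<open>(-1, 1)\<close>, so the cubic is strictly increasing there; since it is negative at \<open>-1\<close> and
  positive at \<open>1\<close>, its zero \<open>w\<close> exists and is characterised by \<open>f_star a b w \<theta> = 0\<close>. Hence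
  \<open>w = 0\<close> iff \<open>f_star a b 0 \<theta> = 2c (1 - 4ac\<^sup>2)\<close> vanishes, i.e. iff \<open>4ac\<^sup>2 = 1\<close>, which on
  \<open>(\<pi>/2, \<pi>)\<close> is the stated arccos condition.
\<close>

lemma power2_add_mult_add_power2_less:
  fixes x y r :: real
  assumes "\<bar>x\<bar> < r" "\<bar>y\<bar> < r"
  shows "x\<^sup>2 + x * y + y\<^sup>2 < 3 * r\<^sup>2"
proof -
  have "2 * x * y \<le> x\<^sup>2 + y\<^sup>2"
    by (rule sum_squares_bound)
  moreover have "x\<^sup>2 < r\<^sup>2" "y\<^sup>2 < r\<^sup>2"
    using assms by (simp_all add: power2_strict_mono)
  ultimately show ?thesis by linarith
qed

definition f_star_slope :: "real \<Rightarrow> real \<Rightarrow> real \<Rightarrow> real \<Rightarrow> real \<Rightarrow> real" where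
  "f_star_slope a b c z1 z2 =
     2 * c * (z1 + z2) + 1 + 4 * c\<^sup>2 + b
     - a * ((z1 + 2 * c)\<^sup>2 + (z1 + 2 * c) * (z2 + 2 * c) + (z2 + 2 * c)\<^sup>2)"

lemma f_star_diff:
  "f_star a b z1 \<theta> - f_star a b z2 \<theta> = (z1 - z2) * f_star_slope a b (cos \<theta>) z1 z2"
  unfolding f_star_def f_star_slope_def
  by (simp add: algebra_simps power2_eq_square power3_eq_cube)

lemma f_star_slope_pos:
  fixes a b c z1 z2 :: real
  assumes "b > 0" "9 - 27 * a + b > 0"
    and "-1 < c" "c < 0" "\<bar>z1\<bar> < 1" "\<bar>z2\<bar> < 1"
  shows "f_star_slope a b c z1 z2 > 0"
proof -
  define S where "S = (z1 + 2 * c)\<^sup>2 + (z1 + 2 * c) * (z2 + 2 * c) + (z2 + 2 * c)\<^sup>2"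
  have "S = (z1 + 2 * c + (z2 + 2 * c) / 2)\<^sup>2 + 3 / 4 * (z2 + 2 * c)\<^sup>2"
    unfolding S_def by (simp add: power2_eq_square field_simps)
  then have S_nonneg: "S \<ge> 0"
    by simp
  show ?thesis
  proof (cases "a \<le> 0")
    case True
    have "a * S \<le> 0"
      using True S_nonneg by (simp add: mult_nonpos_nonneg)
    moreover have "c * (z1 + z2) > c * 2"
      using assms by (intro mult_strict_left_mono_neg) auto
    moreover have "4 * c + 1 + 4 * c\<^sup>2 = (1 + 2 * c)\<^sup>2"
      by (simp add: power2_eq_square algebra_simps)
    ultimately show ?thesis
      using \<open>b > 0\<close> zero_le_power2[of "1 + 2 * c"] unfolding f_star_slope_def S_def[symmetric]
      by linarith
  next
    case False
    have "S < 27"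
      using power2_add_mult_add_power2_less[of "z1 + 2 * c" 3 "z2 + 2 * c"] assms
      unfolding S_def by auto
    have "z1\<^sup>2 + z1 * z2 + z2\<^sup>2 < 3"
      using power2_add_mult_add_power2_less[of z1 1 z2] assms by simp
    \<comment> \<open>the \<open>c\<close>-dependence cancels against \<open>S/3\<close>\<close>
    moreover have "2 * c * (z1 + z2) + 1 + 4 * c\<^sup>2 - S / 3 = 1 - (z1\<^sup>2 + z1 * z2 + z2\<^sup>2) / 3"
      unfolding S_def by (simp add: power2_eq_square algebra_simps)
    moreover have "a * S \<le> (9 + b) / 27 * S"
      using S_nonneg assms by (intro mult_right_mono) auto
    moreover have "(9 + b) / 27 * S = S / 3 + b * S / 27"
      by (simp add: field_simps)
    moreover have "b * S \<le> b * 27"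
      using \<open>b > 0\<close> \<open>S < 27\<close> by simp
    ultimately show ?thesis
      unfolding f_star_slope_def S_def[symmetric] by argo
  qed
qed

lemma cubic_margin_pos:
  fixes a b p :: real
  assumes "b > 0" "1 + a + b > 0" "9 - 27 * a + b > 0" "-1 < p" "p < 3"
  shows "p\<^sup>2 * (1 - a * p) + b > 0"
proof (cases "1 - a * p \<ge> 0")
  case True
  then show ?thesis
    using \<open>b > 0\<close> by (simp add: add_nonneg_pos)
next
  case False
  obtain M where M: "p\<^sup>2 \<le> M" "M * (1 - a * p) > - b"
  proof (cases "p \<le> 1")
    case True
    then have "\<bar>p\<bar> \<le> 1"
      using \<open>-1 < p\<close> by simp
    then have "p\<^sup>2 \<le> 1" "a * p \<le> \<bar>a\<bar>"
      using abs_le_square_iff[of p 1] mult_left_le[of "\<bar>p\<bar>" "\<bar>a\<bar>"]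
      by (auto simp: abs_mult[symmetric])
    moreover have "\<bar>a\<bar> < 1 + b"
      using assms by linarith
    ultimately show ?thesis
      by (intro that[of 1]) auto
  next
    case p_gt: False
    have "a * p > 0"
      using False by linarith
    then have "a > 0"
      using p_gt by (simp add: zero_less_mult_iff)
    then have "a * p < a * 3"
      using \<open>p < 3\<close> by simp
    moreover have "p\<^sup>2 < 3\<^sup>2"
      using p_gt \<open>p < 3\<close> by (intro power2_strict_mono) simp
    ultimately show ?thesis
      using assms by (intro that[of 9]) auto
  qed
  have "p\<^sup>2 * (1 - a * p) \<ge> M * (1 - a * p)"
    using M(1) False by (intro mult_right_mono_neg) auto
  then show ?thesis
    using M(2) by linarith
qed

lemma cos_between_minus_one_zero:
  assumes "\<theta> \<in> {pi / 2<..<pi}"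
  shows "-1 < cos \<theta>" "cos \<theta> < 0"
  using assms cos_monotone_0_pi[of "pi / 2" \<theta>] cos_monotone_0_pi[of \<theta> pi] by auto

lemma f_star_strict_mono:
  assumes "b > 0" "9 - 27 * a + b > 0" "\<theta> \<in> {pi / 2<..<pi}"
  shows "strict_mono_on {-1<..<1} (\<lambda>z. f_star a b z \<theta>)"
proof (rule strict_mono_onI)
  fix z1 z2 :: real
  assume "z1 \<in> {-1<..<1}" "z2 \<in> {-1<..<1}" "z1 < z2"
  then have "(z2 - z1) * f_star_slope a b (cos \<theta>) z2 z1 > 0"
    using assms cos_between_minus_one_zero[OF assms(3)] f_star_slope_pos[of b a "cos \<theta>" z2 z1]
    by simp
  then show "f_star a b z1 \<theta> < f_star a b z2 \<theta>"
    using f_star_diff[of a b z2 \<theta> z1] by simp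
qed

lemma f_star_minus_one:
  "f_star a b (-1) \<theta> = - ((1 - 2 * cos \<theta>)\<^sup>2 * (1 - a * (1 - 2 * cos \<theta>)) + b)"
  unfolding f_star_def by (simp add: algebra_simps power2_eq_square power3_eq_cube)

lemma f_star_one:
  "f_star a b 1 \<theta> = (1 + 2 * cos \<theta>)\<^sup>2 * (1 - a * (1 + 2 * cos \<theta>)) + b"
  unfolding f_star_def by (simp add: algebra_simps power2_eq_square power3_eq_cube)

lemma f_star_zero:
  "f_star a b 0 \<theta> = 2 * cos \<theta> * (1 - 4 * a * (cos \<theta>)\<^sup>2)"
  unfolding f_star_def by (simp add: algebra_simps power2_eq_square power3_eq_cube)

lemma f_star_has_zero:
  assumes "b > 0" "1 + a + b > 0" "9 - 27 * a + b > 0" "\<theta> \<in> {pi / 2<..<pi}"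
  shows "\<exists>z \<in> {-1<..<1}. f_star a b z \<theta> = 0"
proof -
  have c: "-1 < cos \<theta>" "cos \<theta> < 0"
    using cos_between_minus_one_zero[OF assms(4)] by auto
  have neg: "f_star a b (-1) \<theta> < 0"
    using cubic_margin_pos[of b a "1 - 2 * cos \<theta>"] assms c by (simp add: f_star_minus_one)
  have pos: "f_star a b 1 \<theta> > 0"
    using cubic_margin_pos[of b a "1 + 2 * cos \<theta>"] assms c by (simp add: f_star_one)
  have "\<forall>z. -1 \<le> z \<and> z \<le> 1 \<longrightarrow> isCont (\<lambda>z. f_star a b z \<theta>) z"
    unfolding f_star_def by (intro allI impI continuous_intros)
  then obtain z where "-1 \<le> z" "z \<le> 1" "f_star a b z \<theta> = 0"
    using IVT[of "\<lambda>z. f_star a b z \<theta>" "-1" 0 1] neg pos by force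
  moreover from this have "z \<noteq> -1" "z \<noteq> 1"
    using neg pos by auto
  ultimately show ?thesis
    by auto
qed

lemma w_eq_iff:
  assumes "b > 0" "1 + a + b > 0" "9 - 27 * a + b > 0" "\<theta> \<in> {pi / 2<..<pi}"
    and "\<zeta> \<in> {-1<..<1}"
  shows "w a b \<theta> = \<zeta> \<longleftrightarrow> f_star a b \<zeta> \<theta> = 0"
proof -
  have "inj_on (\<lambda>z. f_star a b z \<theta>) {-1<..<1}"
    using f_star_strict_mono assms by (blast intro: strict_mono_on_imp_inj_on)
  then have "z1 = z2"
    if "z1 \<in> {-1<..<1} \<and> f_star a b z1 \<theta> = 0" "z2 \<in> {-1<..<1} \<and> f_star a b z2 \<theta> = 0"
    for z1 z2
    using that by (auto dest: inj_onD[of _ _ z1 z2])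
  then have unique: "\<exists>!z. z \<in> {-1<..<1} \<and> f_star a b z \<theta> = 0"
    using f_star_has_zero[OF assms(1-4)] by (intro ex_ex1I) auto
  show ?thesis
    using the1_equality[OF unique] theI'[OF unique] assms(5) unfolding w_def by blast
qed

lemma four_a_cos_square_eq_one_iff:
  fixes a \<theta> :: real
  assumes "\<theta> \<in> {pi / 2<..<pi}"
  shows "4 * a * (cos \<theta>)\<^sup>2 = 1 \<longleftrightarrow> a > 1 / 4 \<and> \<theta> = arccos (- 1 / (2 * sqrt a))"
proof
  assume h: "4 * a * (cos \<theta>)\<^sup>2 = 1"
  have c: "-1 < cos \<theta>" "cos \<theta> < 0"
    using cos_between_minus_one_zero[OF assms] by auto
  then have c2: "0 < (cos \<theta>)\<^sup>2" "(cos \<theta>)\<^sup>2 < 1"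
    using power2_strict_mono[of "cos \<theta>" 1] by auto
  have a: "a = (-1 / (2 * cos \<theta>))\<^sup>2"
    using h c by (simp add: field_simps power2_eq_square)
  then have "sqrt a = -1 / (2 * cos \<theta>)"
    using c by (simp add: divide_nonneg_neg)
  then have "- 1 / (2 * sqrt a) = cos \<theta>"
    using c by simp
  moreover have "a > 1 / 4"
  proof -
    have "a > 0"
      using a c by simp
    then have "4 * a * (cos \<theta>)\<^sup>2 < 4 * a"
      using c2 by simp
    then show ?thesis
      using h by simp
  qed
  ultimately show "a > 1 / 4 \<and> \<theta> = arccos (- 1 / (2 * sqrt a))"
    using assms by (simp add: arccos_cos)
next
  assume h: "a > 1 / 4 \<and> \<theta> = arccos (- 1 / (2 * sqrt a))"
  then have "2 * sqrt a > 1"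
    using real_sqrt_less_mono[of "1 / 4" a] by (simp add: real_sqrt_divide)
  moreover have "sqrt a > 0"
    using h by simp
  ultimately have "\<bar>- 1 / (2 * sqrt a)\<bar> \<le> 1"
    by (simp add: divide_le_eq)
  then have "cos \<theta> = - 1 / (2 * sqrt a)"
    using h cos_arccos_abs by blast
  then show "4 * a * (cos \<theta>)\<^sup>2 = 1"
    using h by (simp add: power_divide power_mult_distrib)
qed

theorem mainTheorem11:
  fixes a b \<theta> :: real
  assumes "b > 0" and "1 + a + b > 0" and "9 - 27 * a + b > 0"
    and "2 - 8 * a + 8 * a ^ 2 + a * b \<noteq> 0" and "b + 1 - a \<noteq> 0"
    and "\<theta> \<in> {pi / 2<..<pi}"
  shows "w a b \<theta> = 0 \<longleftrightarrow> (a > 1 / 4 \<and> \<theta> = arccos (- 1 / (2 * sqrt a)))"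
proof -
  have "w a b \<theta> = 0 \<longleftrightarrow> f_star a b 0 \<theta> = 0"
    using w_eq_iff[of b a \<theta> 0] assms by simp
  also have "\<dots> \<longleftrightarrow> 4 * a * (cos \<theta>)\<^sup>2 = 1"
    using cos_between_minus_one_zero[OF assms(6)] by (simp add: f_star_zero)
  also have "\<dots> \<longleftrightarrow> a > 1 / 4 \<and> \<theta> = arccos (- 1 / (2 * sqrt a))"
    using four_a_cos_square_eq_one_iff[OF assms(6)] .
  finally show ?thesis .
qed

end
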